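(* Let $M$ be a finite abelian group of order $m$, $J$ a Jacobi function on $M$, and $i\colon\hat{M}\to\hat{M}$ a bijection with $i(x)=x\,i(x^{-1})$ for all $x$, such that $J(\alpha,\beta)=\frac{1}{m}\sum_{x\in\hat{M}}\alpha(i(x))\beta(i(x)x^{-1})$ for all $\alpha,\beta\in M$. Define $x\oplus y=x\,i(x/y)^{-1}$ for $x,y\in\hat{M}$. Then for all $\alpha,\beta,\gamma\in M$, \[ \sum_{\substack{(x\oplus y)\oplus z=1,\\ x,y,z\in\hat{M}}}\alpha(x)\beta(y)\gamma(z)=\sum_{\substack{x\oplus(y\oplus z)=1,\\ x,y,z\in\hat{M}}}\alpha(x)\beta(y)\gamma(z). \]
   Context: $\hat{M}$ is the Pontryagin dual of $M$, written multiplicatively with identity $1$; for $\alpha\in M$, $x\in\hat{M}$, $\alpha(x)$ is the value of the character $x$ at $\alpha$. $\delta(\alpha)=1$ if $\alpha$ is the identity of $M$ and $0$ otherwise. A Jacobi function on $M$ is a function $J\colon M\times M\to\mathbf{C}$ satisfying: (A) $J(\alpha,\beta)=J(\beta,\alpha)$; (B) with $J^*(\alpha,\beta)=-\delta(\alpha)-\delta(\beta)+J(\alpha,\beta)$, $J^*(\alpha,\beta)J^*(\alpha\beta,\gamma)=J^*(\alpha,\beta\gamma)J^*(\beta,\gamma)$; (C) $\sum_{\beta\in M}J(\alpha_1\beta,\alpha_2\beta^{-1})J(\alpha_3\beta,\alpha_4\beta^{-1})=J(\alpha_1\alpha_4,\alpha_2\alpha_3)$; all for all elements of $M$. *)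

theory Defs
  imports Complex_Main "HOL-Algebra.Group"
begin

text \<open>A character is represented as a function on the
  underlying type, with value 1 off the carrier (a normalisation convention).\<close>

definition characters :: "('a, 'b) monoid_scheme \<Rightarrow> ('a \<Rightarrow> complex) set" where
  "characters M = {\<chi>. (\<forall>a\<in>carrier M. \<forall>b\<in>carrier M. \<chi> (a \<otimes>\<^bsub>M\<^esub> b) = \<chi> a * \<chi> b)
                      \<and> (\<forall>a\<in>carrier M. cmod (\<chi> a) = 1)
                      \<and> (\<forall>a. a \<notin> carrier M \<longrightarrow> \<chi> a = 1)}"

definition char_one :: "'a \<Rightarrow> complex" where
  "char_one = (\<lambda>_. 1)"

definition char_mult :: "('a \<Rightarrow> complex) \<Rightarrow> ('a \<Rightarrow> complex) \<Rightarrow> ('a \<Rightarrow> complex)" where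
  "char_mult x y = (\<lambda>a. x a * y a)"

definition char_inv :: "('a \<Rightarrow> complex) \<Rightarrow> ('a \<Rightarrow> complex)" where
  "char_inv x = (\<lambda>a. inverse (x a))"

definition kdelta :: "('a, 'b) monoid_scheme \<Rightarrow> 'a \<Rightarrow> complex" where
  "kdelta M a = (if a = \<one>\<^bsub>M\<^esub> then 1 else 0)"

definition Jstar :: "('a, 'b) monoid_scheme \<Rightarrow> ('a \<Rightarrow> 'a \<Rightarrow> complex) \<Rightarrow> 'a \<Rightarrow> 'a \<Rightarrow> complex" where
  "Jstar M J a b = - kdelta M a - kdelta M b + J a b"

definition jacobi_function :: "('a, 'b) monoid_scheme \<Rightarrow> ('a \<Rightarrow> 'a \<Rightarrow> complex) \<Rightarrow> bool" where
  "jacobi_function M J \<longleftrightarrow>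
     (\<forall>a\<in>carrier M. \<forall>b\<in>carrier M. J a b = J b a)
   \<and> (\<forall>a\<in>carrier M. \<forall>b\<in>carrier M. \<forall>c\<in>carrier M.
        Jstar M J a b * Jstar M J (a \<otimes>\<^bsub>M\<^esub> b) c = Jstar M J a (b \<otimes>\<^bsub>M\<^esub> c) * Jstar M J b c)
   \<and> (\<forall>a1\<in>carrier M. \<forall>a2\<in>carrier M. \<forall>a3\<in>carrier M. \<forall>a4\<in>carrier M.
        (\<Sum>b\<in>carrier M. J (a1 \<otimes>\<^bsub>M\<^esub> b) (a2 \<otimes>\<^bsub>M\<^esub> inv\<^bsub>M\<^esub> b)
                        * J (a3 \<otimes>\<^bsub>M\<^esub> b) (a4 \<otimes>\<^bsub>M\<^esub> inv\<^bsub>M\<^esub> b))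
        = J (a1 \<otimes>\<^bsub>M\<^esub> a4) (a2 \<otimes>\<^bsub>M\<^esub> a3))"

definition char_oplus :: "(('a \<Rightarrow> complex) \<Rightarrow> ('a \<Rightarrow> complex)) \<Rightarrow> ('a \<Rightarrow> complex) \<Rightarrow> ('a \<Rightarrow> complex) \<Rightarrow> ('a \<Rightarrow> complex)" where
  "char_oplus i x y = char_mult x (char_inv (i (char_mult x (char_inv y))))"

end

theory Submission
  imports Defs "HOL-Algebra.Multiplicative_Group"
begin

text \<open>Both sums are parametrised by pairs \<open>(t, u)\<close> of characters: a triple with
  \<open>(x \<oplus> y) \<oplus> z = 1\<close> is determined by \<open>t = x/y\<close> and \<open>u = (x \<oplus> y)/z\<close>, and in
  these coordinates the summand factors, so the left-hand side is
  \<open>m\<^sup>2 J(\<alpha>,\<beta>) J(\<alpha>\<beta>,\<gamma>)\<close>; likewise the right-hand side is \<open>m\<^sup>2 J(\<alpha>,\<beta>\<gamma>) J(\<beta>,\<gamma>)\<close>.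
  These agree by the cocycle identity for \<open>J\<close> itself, which follows from axiom (B)
  for \<open>J\<^sup>*\<close> once \<open>J(\<alpha>,\<alpha>\<^sup>-\<^sup>1) = \<delta>(\<alpha>)\<close> is known. By the Fourier formula, \<open>J(\<alpha>,\<alpha>\<^sup>-\<^sup>1)\<close>
  and \<open>J(1,\<alpha>)\<close> both equal \<open>(1/m) \<Sum>\<^sub>x x(\<alpha>)\<close>, and (B) at \<open>(1, \<alpha>, \<alpha>\<^sup>-\<^sup>1)\<close> forces this
  character sum to vanish for \<open>\<alpha> \<noteq> 1\<close>; so the orthogonality relation is derived rather
  than assumed.\<close>

lemma char_nonzero: "x \<in> characters M \<Longrightarrow> x a \<noteq> 0"
  unfolding characters_def by (cases "a \<in> carrier M") fastforce+

lemma char_hom: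
  "x \<in> characters M \<Longrightarrow> a \<in> carrier M \<Longrightarrow> b \<in> carrier M \<Longrightarrow> x (a \<otimes>\<^bsub>M\<^esub> b) = x a * x b"
  unfolding characters_def by blast

lemma char_outside_carrier: "x \<in> characters M \<Longrightarrow> a \<notin> carrier M \<Longrightarrow> x a = 1"
  unfolding characters_def by blast

lemma char_at_one:
  assumes "group M" "x \<in> characters M"
  shows "x \<one>\<^bsub>M\<^esub> = 1"
proof -
  interpret group M by fact
  have "x \<one>\<^bsub>M\<^esub> * x \<one>\<^bsub>M\<^esub> = x \<one>\<^bsub>M\<^esub> * 1"
    using char_hom[OF assms(2), of "\<one>\<^bsub>M\<^esub>" "\<one>\<^bsub>M\<^esub>"] by simp
  then show ?thesis
    using char_nonzero[OF assms(2)] mult_left_cancel by blast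
qed

lemma char_at_inv:
  assumes "group M" "x \<in> characters M" "a \<in> carrier M"
  shows "x (inv\<^bsub>M\<^esub> a) = inverse (x a)"
proof -
  have "x a * x (inv\<^bsub>M\<^esub> a) = 1"
    using char_hom[OF assms(2,3)] char_at_one[OF assms(1,2)] assms
    by (metis group.inv_closed group.r_inv)
  then show ?thesis by (metis inverse_unique)
qed

lemma char_at_pow:
  assumes "group M" "x \<in> characters M" "a \<in> carrier M"
  shows "x (a [^]\<^bsub>M\<^esub> n) = x a ^ n"
proof (induction n)
  case 0
  then show ?case using char_at_one[OF assms(1,2)] by simp
next
  case (Suc n)
  then show ?case
    using char_hom[OF assms(2) _ assms(3), of "a [^]\<^bsub>M\<^esub> n"] assms
    by (simp add: group.is_monoid monoid.nat_pow_closed)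
qed

lemma char_one_in_characters: "char_one \<in> characters M"
  unfolding characters_def char_one_def by simp

lemma char_mult_in_characters:
  "x \<in> characters M \<Longrightarrow> y \<in> characters M \<Longrightarrow> char_mult x y \<in> characters M"
  unfolding characters_def char_mult_def by (auto simp: norm_mult)

lemma char_inv_in_characters: "x \<in> characters M \<Longrightarrow> char_inv x \<in> characters M"
  unfolding characters_def char_inv_def by (auto simp: norm_inverse)

lemma finite_characters:
  assumes "group M" "finite (carrier M)"
  shows "finite (characters M)"
proof -
  let ?R = "\<Pi>\<^sub>E a\<in>carrier M. {z::complex. z ^ order M = 1}"
  have "order M > 0"
    using assms unfolding order_def by (metis card_gt_0_iff empty_iff group.is_monoid monoid.one_closed)
  then have "finite ?R"
    by (intro finite_PiE assms(2) finite_roots_unity) simp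
  moreover have "inj_on (\<lambda>x. restrict x (carrier M)) (characters M)"
    by (rule inj_onI) (metis char_outside_carrier restrict_apply' ext)
  moreover have "(\<lambda>x. restrict x (carrier M)) ` characters M \<subseteq> ?R"
    using char_at_pow[OF assms(1)] char_at_one[OF assms(1)] group.pow_order_eq_1[OF assms(1)]
    by (fastforce simp: PiE_iff)
  ultimately show ?thesis
    using finite_subset finite_image_iff by metis
qed

lemma char_mult_one_left [simp]: "char_mult char_one x = x"
  unfolding char_mult_def char_one_def by simp

lemma char_div_div_cancel:
  "x \<in> characters M \<Longrightarrow> char_mult x (char_inv (char_mult x (char_inv y))) = y"
  unfolding fun_eq_iff char_mult_def char_inv_def using char_nonzero[of x M] by simp

lemma char_mult_div_cancel:
  "v \<in> characters M \<Longrightarrow> char_mult (char_mult w v) (char_inv v) = w"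
  unfolding fun_eq_iff char_mult_def char_inv_def using char_nonzero[of v M] by simp

lemma char_div_mult_cancel:
  "v \<in> characters M \<Longrightarrow> char_mult (char_mult w (char_inv v)) v = w"
  unfolding fun_eq_iff char_mult_def char_inv_def using char_nonzero[of v M] by simp

lemma bij_betw_char_mult:
  "t \<in> characters M \<Longrightarrow> bij_betw (char_mult t) (characters M) (characters M)"
  using char_nonzero[of t M]
  by (intro bij_betw_byWitness[where f' = "char_mult (char_inv t)"])
     (auto simp: char_mult_in_characters char_inv_in_characters,
      auto simp: fun_eq_iff char_mult_def char_inv_def)

lemma sum_characters_cases:
  "(\<Sum>x\<in>characters M. x b) = 0 \<or> (\<Sum>x\<in>characters M. x b) = of_nat (card (characters M))"
proof (cases "\<forall>t\<in>characters M. t b = 1")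
  case True
  then have "(\<Sum>x\<in>characters M. x b) = (\<Sum>x\<in>characters M. 1)"
    by (intro sum.cong) auto
  then show ?thesis by simp
next
  case False
  then obtain t where t: "t \<in> characters M" "t b \<noteq> 1" by blast
  have "(\<Sum>x\<in>characters M. x b) = (\<Sum>x\<in>characters M. char_mult t x b)"
    using sum.reindex_bij_betw[OF bij_betw_char_mult[OF t(1)], of "\<lambda>x. x b"] by simp
  also have "\<dots> = t b * (\<Sum>x\<in>characters M. x b)"
    by (simp add: char_mult_def sum_distrib_left)
  finally have "(1 - t b) * (\<Sum>x\<in>characters M. x b) = 0"
    by (simp add: algebra_simps)
  then show ?thesis using t(2) by simp
qed

lemma sum_carrier_char_eq_0:
  assumes "group M" "x \<in> characters M" "x \<noteq> char_one"
  shows "(\<Sum>g\<in>carrier M. x g) = 0"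
proof -
  interpret group M by fact
  have "\<exists>h\<in>carrier M. x h \<noteq> 1"
  proof (rule ccontr)
    assume "\<not> ?thesis"
    then have "x = char_one"
      using char_outside_carrier[OF assms(2)] by (auto simp: fun_eq_iff char_one_def)
    with assms(3) show False ..
  qed
  then obtain h where h: "h \<in> carrier M" "x h \<noteq> 1" by blast
  have "(\<Sum>g\<in>carrier M. x g) = (\<Sum>g\<in>carrier M. x (h \<otimes>\<^bsub>M\<^esub> g))"
    using sum.reindex[OF inj_on_cmult[OF h(1)], of x] surj_const_mult[OF h(1)] by simp
  also have "\<dots> = x h * (\<Sum>g\<in>carrier M. x g)"
    by (simp add: char_hom[OF assms(2) h(1)] sum_distrib_left)
  finally have "(1 - x h) * (\<Sum>g\<in>carrier M. x g) = 0"
    by (simp add: algebra_simps)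
  then show ?thesis using h(2) by simp
qed

lemma char_inv_inv [simp]: "char_inv (char_inv x) = x"
  unfolding char_inv_def by simp

lemma bij_betw_char_inv: "bij_betw char_inv (characters M) (characters M)"
  by (rule bij_betw_byWitness[where f' = char_inv]) (auto intro: char_inv_in_characters)

lemma char_oplus_in_characters:
  "i ` characters M \<subseteq> characters M \<Longrightarrow> x \<in> characters M \<Longrightarrow> y \<in> characters M
    \<Longrightarrow> char_oplus i x y \<in> characters M"
  unfolding char_oplus_def by (auto intro!: char_mult_in_characters char_inv_in_characters)

definition oplus_solution ::
  "(('a \<Rightarrow> complex) \<Rightarrow> ('a \<Rightarrow> complex)) \<Rightarrow> ('a \<Rightarrow> complex) \<Rightarrow> ('a \<Rightarrow> complex)
    \<Rightarrow> ('a \<Rightarrow> complex) \<times> ('a \<Rightarrow> complex)" where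
  "oplus_solution i w t = (char_mult w (i t), char_mult (char_mult w (i t)) (char_inv t))"

lemma oplus_solution_eq_iff:
  assumes "i ` characters M \<subseteq> characters M" "x \<in> characters M" "t \<in> characters M"
  shows "oplus_solution i w t = (x, y) \<longleftrightarrow>
    char_oplus i x y = w \<and> char_mult x (char_inv y) = t"
proof
  have it: "i t \<in> characters M" using assms(1,3) by blast
  show "char_oplus i x y = w \<and> char_mult x (char_inv y) = t" if "oplus_solution i w t = (x, y)"
    using that char_div_div_cancel[OF assms(2)] char_mult_div_cancel[OF it]
    unfolding oplus_solution_def char_oplus_def by auto
  show "oplus_solution i w t = (x, y)" if "char_oplus i x y = w \<and> char_mult x (char_inv y) = t"
    using that char_div_div_cancel[OF assms(2)] char_div_mult_cancel[OF it]
    unfolding oplus_solution_def char_oplus_def by auto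
qed

definition oplus_kernel ::
  "('a, 'b) monoid_scheme \<Rightarrow> (('a \<Rightarrow> complex) \<Rightarrow> ('a \<Rightarrow> complex)) \<Rightarrow> 'a \<Rightarrow> 'a \<Rightarrow> complex" where
  "oplus_kernel M i a b = (\<Sum>x\<in>characters M. i x a * char_mult (i x) (char_inv x) b)"

lemma sum_oplus_left_assoc:
  assumes i: "i ` characters M \<subseteq> characters M"
    and a: "a \<in> carrier M" and b: "b \<in> carrier M"
  shows "(\<Sum>(x, y, z)\<in>{(x, y, z). x \<in> characters M \<and> y \<in> characters M \<and> z \<in> characters M
            \<and> char_oplus i (char_oplus i x y) z = char_one}. x a * y b * z c)
    = oplus_kernel M i a b * oplus_kernel M i (a \<otimes>\<^bsub>M\<^esub> b) c"
proof -
  let ?X = "characters M"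
  note closed = char_mult_in_characters char_inv_in_characters char_oplus_in_characters[OF i]
    subsetD[OF i imageI]
  have forward: "char_oplus i (char_oplus i x y) z = char_one
      \<and> char_mult x (char_inv y) = t \<and> char_mult (char_oplus i x y) (char_inv z) = u"
    if "t \<in> ?X" "u \<in> ?X" "x = char_mult (i u) (i t)" "y = char_mult x (char_inv t)"
      "z = char_mult (i u) (char_inv u)" for t u x y z
    using oplus_solution_eq_iff[OF i _ that(1), of x "i u" y]
      oplus_solution_eq_iff[OF i _ that(2), of "i u" char_one z] that
    by (simp add: oplus_solution_def closed)
  have backward: "x = char_mult (i u) (i t) \<and> y = char_mult x (char_inv t)
      \<and> z = char_mult (i u) (char_inv u)"
    if "x \<in> ?X" "y \<in> ?X" "z \<in> ?X" "char_oplus i (char_oplus i x y) z = char_one"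
      "t = char_mult x (char_inv y)" "u = char_mult (char_oplus i x y) (char_inv z)" for t u x y z
    using oplus_solution_eq_iff[OF i that(1), of t "char_oplus i x y" y]
      oplus_solution_eq_iff[OF i _ _, of "char_oplus i x y" u char_one z] that
      char_div_div_cancel[OF that(1)] char_div_div_cancel[OF closed(3)[OF that(1,2)]]
    by (simp add: oplus_solution_def closed)
  have "oplus_kernel M i a b * oplus_kernel M i (a \<otimes>\<^bsub>M\<^esub> b) c
      = (\<Sum>(t, u)\<in>?X \<times> ?X. (i t a * char_mult (i t) (char_inv t) b)
          * (i u (a \<otimes>\<^bsub>M\<^esub> b) * char_mult (i u) (char_inv u) c))"
    unfolding oplus_kernel_def by (simp add: sum_product sum.cartesian_product)
  also have "\<dots> = (\<Sum>(x, y, z)\<in>{(x, y, z). x \<in> ?X \<and> y \<in> ?X \<and> z \<in> ?X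
            \<and> char_oplus i (char_oplus i x y) z = char_one}. x a * y b * z c)"
  proof (rule sum.reindex_bij_witness[where
          j = "\<lambda>(t, u). (char_mult (i u) (i t), char_mult (char_mult (i u) (i t)) (char_inv t),
                         char_mult (i u) (char_inv u))"
          and i = "\<lambda>(x, y, z). (char_mult x (char_inv y), char_mult (char_oplus i x y) (char_inv z))"],
      goal_cases)
    case (1 p)
    then show ?case using forward by auto
  next
    case (2 p)
    then show ?case using forward by (auto simp: closed)
  next
    case (3 p)
    then show ?case using backward by auto
  next
    case (4 p)
    then show ?case by (auto simp: closed)
  next
    case (5 p)
    then obtain t u where "p = (t, u)" "u \<in> ?X" by blast
    then show ?case
      by (simp add: char_hom[OF closed(4) a b] char_mult_def char_inv_def)
  qed
  finally show ?thesis ..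
qed

lemma sum_oplus_right_assoc:
  assumes i: "i ` characters M \<subseteq> characters M"
    and b: "b \<in> carrier M" and c: "c \<in> carrier M"
  shows "(\<Sum>(x, y, z)\<in>{(x, y, z). x \<in> characters M \<and> y \<in> characters M \<and> z \<in> characters M
            \<and> char_oplus i x (char_oplus i y z) = char_one}. x a * y b * z c)
    = oplus_kernel M i a (b \<otimes>\<^bsub>M\<^esub> c) * oplus_kernel M i b c"
proof -
  let ?X = "characters M"
  note closed = char_mult_in_characters char_inv_in_characters char_oplus_in_characters[OF i]
    subsetD[OF i imageI]
  have forward: "char_oplus i x (char_oplus i y z) = char_one
      \<and> char_mult x (char_inv (char_oplus i y z)) = u \<and> char_mult y (char_inv z) = t"
    if "u \<in> ?X" "t \<in> ?X" "x = i u" "y = char_mult (char_mult (i u) (char_inv u)) (i t)"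
      "z = char_mult y (char_inv t)" for u t x y z
    using oplus_solution_eq_iff[OF i _ that(1), of x char_one "char_mult (i u) (char_inv u)"]
      oplus_solution_eq_iff[OF i _ that(2), of y "char_mult (i u) (char_inv u)" z] that
    by (simp add: oplus_solution_def closed)
  have backward: "x = i u \<and> y = char_mult (char_mult (i u) (char_inv u)) (i t)
      \<and> z = char_mult y (char_inv t)"
    if "x \<in> ?X" "y \<in> ?X" "z \<in> ?X" "char_oplus i x (char_oplus i y z) = char_one"
      "u = char_mult x (char_inv (char_oplus i y z))" "t = char_mult y (char_inv z)" for u t x y z
    using oplus_solution_eq_iff[OF i that(1), of u char_one "char_oplus i y z"]
      oplus_solution_eq_iff[OF i that(2), of t "char_oplus i y z" z] that
      char_div_div_cancel[OF that(2)] char_div_div_cancel[OF that(1)]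
    by (simp add: oplus_solution_def closed)
  have "oplus_kernel M i a (b \<otimes>\<^bsub>M\<^esub> c) * oplus_kernel M i b c
      = (\<Sum>(u, t)\<in>?X \<times> ?X. (i u a * char_mult (i u) (char_inv u) (b \<otimes>\<^bsub>M\<^esub> c))
          * (i t b * char_mult (i t) (char_inv t) c))"
    unfolding oplus_kernel_def by (simp add: sum_product sum.cartesian_product)
  also have "\<dots> = (\<Sum>(x, y, z)\<in>{(x, y, z). x \<in> ?X \<and> y \<in> ?X \<and> z \<in> ?X
            \<and> char_oplus i x (char_oplus i y z) = char_one}. x a * y b * z c)"
  proof (rule sum.reindex_bij_witness[where
          j = "\<lambda>(u, t). (i u, char_mult (char_mult (i u) (char_inv u)) (i t),
                         char_mult (char_mult (char_mult (i u) (char_inv u)) (i t)) (char_inv t))"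
          and i = "\<lambda>(x, y, z). (char_mult x (char_inv (char_oplus i y z)), char_mult y (char_inv z))"],
      goal_cases)
    case (1 p)
    then show ?case using forward by auto
  next
    case (2 p)
    then show ?case using forward by (auto simp: closed)
  next
    case (3 p)
    then obtain x y z where "p = (x, y, z)" and xyz: "x \<in> ?X" "y \<in> ?X" "z \<in> ?X"
      "char_oplus i x (char_oplus i y z) = char_one" by blast
    with backward[OF xyz refl refl] show ?case by (simp only: prod.case prod.inject) metis
  next
    case (4 p)
    then show ?case by (auto simp: closed)
  next
    case (5 p)
    then obtain u t where p: "p = (u, t)" and u: "u \<in> ?X" by blast
    have "char_mult (i u) (char_inv u) (b \<otimes>\<^bsub>M\<^esub> c)
        = char_mult (i u) (char_inv u) b * char_mult (i u) (char_inv u) c"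
      using u by (intro char_hom[OF _ b c]) (simp add: closed)
    then show ?case by (simp add: p char_mult_def char_inv_def)
  qed
  finally show ?thesis ..
qed

lemma J_cocycle_if_Jstar_cocycle:
  assumes "group M" and a: "a \<in> carrier M" and b: "b \<in> carrier M" and c: "c \<in> carrier M"
    and Jstar_cocycle:
      "Jstar M J a b * Jstar M J (a \<otimes>\<^bsub>M\<^esub> b) c = Jstar M J a (b \<otimes>\<^bsub>M\<^esub> c) * Jstar M J b c"
    and J_inv: "\<And>x. x \<in> carrier M \<Longrightarrow> J x (inv\<^bsub>M\<^esub> x) = kdelta M x"
  shows "J a b * J (a \<otimes>\<^bsub>M\<^esub> b) c = J a (b \<otimes>\<^bsub>M\<^esub> c) * J b c"
proof -
  interpret group M by fact
  have at_inverse: "kdelta M (x \<otimes>\<^bsub>M\<^esub> y) * J x y = kdelta M (x \<otimes>\<^bsub>M\<^esub> y) * kdelta M x"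
    if "x \<in> carrier M" "y \<in> carrier M" for x y
  proof (cases "x \<otimes>\<^bsub>M\<^esub> y = \<one>\<^bsub>M\<^esub>")
    case True
    then have "y = inv\<^bsub>M\<^esub> x" using inv_equality[OF inv_comm[OF True that] that] by simp
    then show ?thesis using J_inv[OF that(1)] by simp
  qed (simp add: kdelta_def)
  have delta_substitutions:
    "kdelta M c * J a (b \<otimes>\<^bsub>M\<^esub> c) = kdelta M c * J a b"
    "kdelta M a * J (a \<otimes>\<^bsub>M\<^esub> b) c = kdelta M a * J b c"
    "kdelta M b * J (a \<otimes>\<^bsub>M\<^esub> b) c = kdelta M b * J a c"
    "kdelta M b * J a (b \<otimes>\<^bsub>M\<^esub> c) = kdelta M b * J a c"
    "kdelta M b * kdelta M (a \<otimes>\<^bsub>M\<^esub> b) = kdelta M b * kdelta M a"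
    "kdelta M c * kdelta M (b \<otimes>\<^bsub>M\<^esub> c) = kdelta M c * kdelta M b"
    using a b c by (simp_all add: kdelta_def)
  text \<open>Expanding \<open>J\<^sup>*\<close>, the two cocycle identities differ by \<open>\<delta>\<close>-terms, which the
    substitutions above pair off.\<close>
  have "J a b * J (a \<otimes>\<^bsub>M\<^esub> b) c - J a (b \<otimes>\<^bsub>M\<^esub> c) * J b c
      = (Jstar M J a b * Jstar M J (a \<otimes>\<^bsub>M\<^esub> b) c - Jstar M J a (b \<otimes>\<^bsub>M\<^esub> c) * Jstar M J b c)
        - (kdelta M c * J a (b \<otimes>\<^bsub>M\<^esub> c) - kdelta M c * J a b)
        + (kdelta M a * J (a \<otimes>\<^bsub>M\<^esub> b) c - kdelta M a * J b c)
        + (kdelta M b * J (a \<otimes>\<^bsub>M\<^esub> b) c - kdelta M b * J a c)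
        - (kdelta M b * J a (b \<otimes>\<^bsub>M\<^esub> c) - kdelta M b * J a c)
        + (kdelta M (a \<otimes>\<^bsub>M\<^esub> b) * J a b - kdelta M (a \<otimes>\<^bsub>M\<^esub> b) * kdelta M a)
        - (kdelta M (b \<otimes>\<^bsub>M\<^esub> c) * J b c - kdelta M (b \<otimes>\<^bsub>M\<^esub> c) * kdelta M b)
        - (kdelta M b * kdelta M (a \<otimes>\<^bsub>M\<^esub> b) - kdelta M b * kdelta M a)
        + (kdelta M c * kdelta M (b \<otimes>\<^bsub>M\<^esub> c) - kdelta M c * kdelta M b)"
    unfolding Jstar_def by (simp add: algebra_simps)
  then show ?thesis
    using delta_substitutions at_inverse[OF a b] at_inverse[OF b c] Jstar_cocycle by simp
qed

locale fourier_jacobi =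
  fixes M :: "('a, 'b) monoid_scheme"
    and J :: "'a \<Rightarrow> 'a \<Rightarrow> complex"
    and i :: "('a \<Rightarrow> complex) \<Rightarrow> ('a \<Rightarrow> complex)"
  assumes group: "group M"
    and finite_carrier: "finite (carrier M)"
    and Jstar_cocycle: "\<And>a b c. a \<in> carrier M \<Longrightarrow> b \<in> carrier M \<Longrightarrow> c \<in> carrier M \<Longrightarrow>
      Jstar M J a b * Jstar M J (a \<otimes>\<^bsub>M\<^esub> b) c = Jstar M J a (b \<otimes>\<^bsub>M\<^esub> c) * Jstar M J b c"
    and i_bij: "bij_betw i (characters M) (characters M)"
    and i_char_inv: "\<And>x. x \<in> characters M \<Longrightarrow> i x = char_mult x (i (char_inv x))"
    and J_fourier: "\<And>a b. a \<in> carrier M \<Longrightarrow> b \<in> carrier M \<Longrightarrow>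
      J a b = oplus_kernel M i a b / of_nat (order M)"
begin

interpretation group M by (fact group)

lemma i_in_characters: "x \<in> characters M \<Longrightarrow> i x \<in> characters M"
  using i_bij bij_betwE by blast

lemma order_nonzero: "(of_nat (order M) :: complex) \<noteq> 0"
  using finite_carrier unfolding order_def by (auto simp: card_eq_0_iff)

lemma J_one_eq_sum_characters:
  assumes "b \<in> carrier M"
  shows "J \<one>\<^bsub>M\<^esub> b = (\<Sum>x\<in>characters M. x b) / of_nat (order M)"
proof -
  have "char_mult (i x) (char_inv x) = i (char_inv x)" if "x \<in> characters M" for x
    using i_char_inv[OF that] char_nonzero[OF that]
    by (simp add: fun_eq_iff char_mult_def char_inv_def)
  then have "oplus_kernel M i \<one>\<^bsub>M\<^esub> b = (\<Sum>x\<in>characters M. i (char_inv x) b)"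
    unfolding oplus_kernel_def by (intro sum.cong) (simp_all add: char_at_one group i_in_characters)
  also have "\<dots> = (\<Sum>x\<in>characters M. x b)"
    using sum.reindex_bij_betw[OF bij_betw_trans[OF bij_betw_char_inv i_bij], of "\<lambda>x. x b"]
    by simp
  finally show ?thesis using J_fourier[OF one_closed assms] by simp
qed

lemma J_inv_eq_sum_characters:
  assumes "b \<in> carrier M"
  shows "J b (inv\<^bsub>M\<^esub> b) = (\<Sum>x\<in>characters M. x b) / of_nat (order M)"
proof -
  have "i x b * char_mult (i x) (char_inv x) (inv\<^bsub>M\<^esub> b) = x b" if "x \<in> characters M" for x
    using char_nonzero[OF i_in_characters[OF that], of b]
      char_at_inv[OF group that assms] char_at_inv[OF group i_in_characters[OF that] assms]
    by (simp add: char_mult_def char_inv_def)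
  then have "oplus_kernel M i b (inv\<^bsub>M\<^esub> b) = (\<Sum>x\<in>characters M. x b)"
    unfolding oplus_kernel_def by (rule sum.cong[OF refl])
  then show ?thesis using J_fourier[OF assms inv_closed[OF assms]] by simp
qed

lemma sum_characters_eq_0:
  assumes h: "h \<in> carrier M" "h \<noteq> \<one>\<^bsub>M\<^esub>"
  shows "(\<Sum>x\<in>characters M. x h) = 0"
proof (rule ccontr)
  let ?\<sigma> = "\<lambda>b. (\<Sum>x\<in>characters M. x b) / of_nat (order M)"
  assume nonzero: "(\<Sum>x\<in>characters M. x h) \<noteq> 0"
  have "(\<Sum>x\<in>characters M. x \<one>\<^bsub>M\<^esub>) = of_nat (card (characters M))"
    by (simp add: char_at_one[OF group])
  then have same: "?\<sigma> h = ?\<sigma> \<one>\<^bsub>M\<^esub>"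
    using nonzero sum_characters_cases[where M = M and b = h] by simp
  have "Jstar M J \<one>\<^bsub>M\<^esub> h * Jstar M J (\<one>\<^bsub>M\<^esub> \<otimes>\<^bsub>M\<^esub> h) (inv\<^bsub>M\<^esub> h)
      = Jstar M J \<one>\<^bsub>M\<^esub> (h \<otimes>\<^bsub>M\<^esub> inv\<^bsub>M\<^esub> h) * Jstar M J h (inv\<^bsub>M\<^esub> h)"
    using Jstar_cocycle[OF one_closed h(1) inv_closed[OF h(1)]] .
  then have "(?\<sigma> h - 1) * ?\<sigma> h = (?\<sigma> \<one>\<^bsub>M\<^esub> - 2) * ?\<sigma> h"
    using h by (simp add: Jstar_def kdelta_def J_one_eq_sum_characters J_inv_eq_sum_characters)
  then show False
    using same nonzero order_nonzero by simp
qed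

lemma sum_characters_at_one: "(\<Sum>x\<in>characters M. x \<one>\<^bsub>M\<^esub>) = of_nat (order M)"
proof -
  have "(\<Sum>x\<in>characters M. x \<one>\<^bsub>M\<^esub>) = (\<Sum>g\<in>carrier M. \<Sum>x\<in>characters M. x g)"
    using sum.remove[OF finite_carrier one_closed, of "\<lambda>g. \<Sum>x\<in>characters M. x g"]
    by (simp add: sum_characters_eq_0)
  also have "\<dots> = (\<Sum>x\<in>characters M. \<Sum>g\<in>carrier M. x g)"
    by (rule sum.swap)
  also have "\<dots> = (\<Sum>x\<in>characters M. if x = char_one then of_nat (order M) else 0)"
    by (rule sum.cong) (auto simp: sum_carrier_char_eq_0[OF group] char_one_def order_def)
  also have "\<dots> = of_nat (order M)"
    using finite_characters[OF group finite_carrier] char_one_in_characters[of M] by simp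
  finally show ?thesis .
qed

lemma J_inv_eq_kdelta:
  assumes "b \<in> carrier M"
  shows "J b (inv\<^bsub>M\<^esub> b) = kdelta M b"
  using J_inv_eq_sum_characters[OF assms] sum_characters_at_one sum_characters_eq_0[OF assms] order_nonzero
  by (auto simp: kdelta_def)

lemma oplus_kernel_cocycle:
  assumes "a \<in> carrier M" "b \<in> carrier M" "c \<in> carrier M"
  shows "oplus_kernel M i a b * oplus_kernel M i (a \<otimes>\<^bsub>M\<^esub> b) c
    = oplus_kernel M i a (b \<otimes>\<^bsub>M\<^esub> c) * oplus_kernel M i b c"
  using J_cocycle_if_Jstar_cocycle[OF group assms Jstar_cocycle[OF assms] J_inv_eq_kdelta]
    assms order_nonzero
  by (simp add: J_fourier)

end

theorem mainTheorem16:
  fixes M :: "('a, 'b) monoid_scheme"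
    and J :: "'a \<Rightarrow> 'a \<Rightarrow> complex"
    and i :: "('a \<Rightarrow> complex) \<Rightarrow> ('a \<Rightarrow> complex)"
    and m :: nat
  assumes "comm_group M"
    and "finite (carrier M)"
    and "m = card (carrier M)"
    and "jacobi_function M J"
    and "bij_betw i (characters M) (characters M)"
    and "\<forall>x\<in>characters M. i x = char_mult x (i (char_inv x))"
    and "\<forall>a\<in>carrier M. \<forall>b\<in>carrier M.
           J a b = (1 / of_nat m) * (\<Sum>x\<in>characters M. i x a * char_mult (i x) (char_inv x) b)"
    and "a \<in> carrier M" and "b \<in> carrier M" and "c \<in> carrier M"
  shows "(\<Sum>(x, y, z)\<in>{(x, y, z). x \<in> characters M \<and> y \<in> characters M \<and> z \<in> characters M
              \<and> char_oplus i (char_oplus i x y) z = char_one}. x a * y b * z c)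
       = (\<Sum>(x, y, z)\<in>{(x, y, z). x \<in> characters M \<and> y \<in> characters M \<and> z \<in> characters M
              \<and> char_oplus i x (char_oplus i y z) = char_one}. x a * y b * z c)"
proof -
  interpret fourier_jacobi M J i
  proof (rule fourier_jacobi.intro)
    show "group M" using assms(1) by (rule comm_group.axioms(2))
  qed (use assms(2-7) in \<open>auto simp: jacobi_function_def oplus_kernel_def order_def\<close>)
  have i: "i ` characters M \<subseteq> characters M"
    using assms(5) by (simp add: bij_betw_def)
  show ?thesis
    unfolding sum_oplus_left_assoc[OF i assms(8,9)] sum_oplus_right_assoc[OF i assms(9,10)]
    by (rule oplus_kernel_cocycle[OF assms(8-10)])
qed

end
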